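(* For each $K\in\mathbb{N}$ there exist an alphabet $\mathcal{A}$, a set $\mathcal{M}$ of $K$ probability measures on $\mathcal{A}^\infty$ and $\mu\in\mathcal{M}$ such that, if $w$ is the uniform prior on $\mathcal{M}$ and $\xi$ the corresponding Bayes mixture, then $\mathbb{E}_\mu C_\infty>\frac12\ln^2K-1$.
   Context: $\mathcal{A}^\infty$ carries the $\sigma$-algebra generated by cylinders $\Gamma_x=\{x\omega\}$; for a measure $\rho$, $\rho(x):=\rho(\Gamma_x)$, $\rho(y|x):=\rho(xy)/\rho(x)$. Bayes mixture: $\xi(A):=\sum_{\nu\in\mathcal{M}}w_\nu\nu(A)$ with $w_\nu=1/K$; posterior $w_\nu(x):=w_\nu\nu(x)/\xi(x)$. Logarithms are natural. For a finite string $x$, $d_x(\nu,\xi):=\sum_{a}\nu(a|x)\ln\frac{\nu(a|x)}{\xi(a|x)}$. For $\omega\in\mathcal{A}^\infty$, $c_t(\omega):=\sum_{\nu\in\mathcal{M}}w_\nu(\omega_{<t})\,d_{\omega_{<t}}(\nu,\xi)$ and $C_\infty:=\sum_{t\ge1}c_t$. *)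

theory Defs
  imports "HOL-Probability.Probability"
begin

definition seq_space :: "nat set \<Rightarrow> (nat \<Rightarrow> nat) measure" where
  "seq_space A = PiM UNIV (\<lambda>_. count_space A)"

definition cyl :: "nat set \<Rightarrow> nat list \<Rightarrow> (nat \<Rightarrow> nat) set" where
  "cyl A x = {\<omega> \<in> space (seq_space A). \<forall>i<length x. \<omega> i = x ! i}"

definition mstr :: "nat set \<Rightarrow> (nat \<Rightarrow> nat) measure \<Rightarrow> nat list \<Rightarrow> real" where
  "mstr A \<rho> x = measure \<rho> (cyl A x)"

definition mix :: "nat set \<Rightarrow> (nat \<Rightarrow> nat) measure set \<Rightarrow> nat list \<Rightarrow> real" where
  "mix A M x = (\<Sum>\<nu>\<in>M. (1 / real (card M)) * mstr A \<nu> x)"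

definition condp :: "(nat list \<Rightarrow> real) \<Rightarrow> nat list \<Rightarrow> nat \<Rightarrow> real" where
  "condp \<rho> x a = \<rho> (x @ [a]) / \<rho> x"

definition post :: "nat set \<Rightarrow> (nat \<Rightarrow> nat) measure set \<Rightarrow> (nat \<Rightarrow> nat) measure \<Rightarrow> nat list \<Rightarrow> real" where
  "post A M \<nu> x = (1 / real (card M)) * mstr A \<nu> x / mix A M x"

definition dKL :: "nat set \<Rightarrow> (nat \<Rightarrow> nat) measure set \<Rightarrow> (nat \<Rightarrow> nat) measure \<Rightarrow> nat list \<Rightarrow> real" where
  "dKL A M \<nu> x = (\<Sum>a\<in>A. condp (mstr A \<nu>) x a *
       ln (condp (mstr A \<nu>) x a / condp (mix A M) x a))"

text \<open>Prefix omega_{<t} of length t-1 = n (we index by n = t - 1).\<close>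
definition pref :: "nat \<Rightarrow> (nat \<Rightarrow> nat) \<Rightarrow> nat list" where
  "pref n \<omega> = map \<omega> [0..<n]"

text \<open>c_t(omega) with t = n + 1\<close>
definition cstep :: "nat set \<Rightarrow> (nat \<Rightarrow> nat) measure set \<Rightarrow> nat \<Rightarrow> (nat \<Rightarrow> nat) \<Rightarrow> real" where
  "cstep A M n \<omega> = (\<Sum>\<nu>\<in>M. post A M \<nu> (pref n \<omega>) * dKL A M \<nu> (pref n \<omega>))"

text \<open>C_infinity = sum_{t>=1} c_t (a series of nonnegative terms, valued in [0,\<infinity>])\<close>
definition Cinf :: "nat set \<Rightarrow> (nat \<Rightarrow> nat) measure set \<Rightarrow> (nat \<Rightarrow> nat) \<Rightarrow> ennreal" where
  "Cinf A M \<omega> = (\<Sum>n. ennreal (cstep A M n \<omega>))"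

end

theory Submission
  imports Defs
begin

(* For a finite class of deterministic environments with uniform prior, the posterior after x is
   uniform on the hypotheses consistent with x, and c_t along a sequence is the average over these
   hypotheses of ln (N x / N (x a)), where N counts consistent hypotheses and a is the symbol the
   hypothesis predicts next.  Take the K environments on {0,1} whose sequences have a single 1, at
   times 0, ..., K - 1, and let mu be the one whose 1 comes last.  Along its sequence, after n zeros
   k = K - n hypotheses remain: one predicts 1 and has N = 1 next, the others predict 0 and have
   N = k - 1 next.  So c = (ln k + (k - 1) ln (k / (k - 1))) / k, which is at least
   (ln^2 k - ln^2 (k - 1)) / 2; the sum telescopes to ln^2 K / 2, and mu is a point mass, so this
   is also the expectation. *)

lemma length_pref [simp]: "length (pref n w) = n"
  by (simp add: pref_def)

lemma pref_Suc: "pref (Suc n) w = pref n w @ [w n]"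
  by (simp add: pref_def)

lemma pref_eq_iff: "pref n v = pref n w \<longleftrightarrow> (\<forall>i<n. v i = w i)"
  by (auto simp: pref_def list_eq_iff_nth_eq)

lemma pref_length_eq_iff: "pref (length x) w = x \<longleftrightarrow> (\<forall>i<length x. w i = x ! i)"
proof -
  have "pref (length x) w = x \<longleftrightarrow> (\<forall>i<length x. pref (length x) w ! i = x ! i)"
    by (simp only: list_eq_iff_nth_eq length_pref simp_thms)
  also have "\<dots> \<longleftrightarrow> (\<forall>i<length x. w i = x ! i)"
    by (simp add: pref_def)
  finally show ?thesis .
qed

lemma seq_space_in_alphabet: "w \<in> space (seq_space A) \<Longrightarrow> w n \<in> A"
  by (auto simp: seq_space_def space_PiM)

lemma cyl_in_sets: "cyl A x \<in> sets (seq_space A)"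
  unfolding cyl_def seq_space_def by measurable

lemma singleton_in_seq_space:
  assumes "w \<in> space (seq_space A)" shows "{w} \<in> sets (seq_space A)"
proof -
  have "{w} = {v \<in> space (seq_space A). \<forall>i. v i = w i}" using assms by auto
  also have "\<dots> \<in> sets (seq_space A)" unfolding seq_space_def by measurable
  finally show ?thesis .
qed

lemma mstr_return:
  assumes "w \<in> space (seq_space A)"
  shows "mstr A (return (seq_space A) w) x = (if pref (length x) w = x then 1 else 0)"
proof -
  have "w \<in> cyl A x \<longleftrightarrow> pref (length x) w = x"
    using assms by (simp add: cyl_def pref_length_eq_iff)
  then show ?thesis
    unfolding mstr_def measure_return[OF cyl_in_sets] indicator_def by simp
qed

lemma nn_integral_return_singleton:
  assumes "x \<in> space M" "{x} \<in> sets M"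
  shows "(\<integral>\<^sup>+ y. f y \<partial>return M x) = f x"
proof -
  interpret prob_space "return M x" by (rule prob_space_return[OF assms(1)])
  have "Measurable.pred M (\<lambda>y. y = x)"
    using assms by (simp add: pred_def Int_absorb1 Collect_conv_if)
  then have "AE y in return M x. y = x" using assms(1) by (simp add: AE_return)
  then have "AE y in return M x. f y = f x" by eventually_elim simp
  then have "(\<integral>\<^sup>+ y. f y \<partial>return M x) = (\<integral>\<^sup>+ y. f x \<partial>return M x)"
    by (rule nn_integral_cong_AE)
  also have "\<dots> = f x" using assms(1) by simp
  finally show ?thesis .
qed

locale deterministic_class =
  fixes A :: "nat set" and I :: "'i set" and \<omega> :: "'i \<Rightarrow> nat \<Rightarrow> nat"
  assumes finite_A: "finite A" and finite_I: "finite I" and inj_\<omega>: "inj_on \<omega> I"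
    and \<omega>_space: "i \<in> I \<Longrightarrow> \<omega> i \<in> space (seq_space A)"
begin

definition env :: "'i \<Rightarrow> (nat \<Rightarrow> nat) measure" where
  "env i = return (seq_space A) (\<omega> i)"

definition envs :: "(nat \<Rightarrow> nat) measure set" where
  "envs = env ` I"

definition consistent :: "nat list \<Rightarrow> 'i set" where
  "consistent x = {i \<in> I. pref (length x) (\<omega> i) = x}"

abbreviation N :: "nat list \<Rightarrow> real" where
  "N x \<equiv> real (card (consistent x))"

lemma mstr_env: "i \<in> I \<Longrightarrow> mstr A (env i) x = (if i \<in> consistent x then 1 else 0)"
  by (simp add: env_def consistent_def mstr_return \<omega>_space)

lemma inj_on_env: "inj_on env I"
proof (rule inj_onI)
  fix i j assume ij: "i \<in> I" "j \<in> I" "env i = env j"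
  have "\<omega> i m = \<omega> j m" for m
  proof -
    have "i \<in> consistent (pref (Suc m) (\<omega> i))" using ij by (simp add: consistent_def)
    then have "j \<in> consistent (pref (Suc m) (\<omega> i))" using mstr_env ij by (metis zero_neq_one)
    then show ?thesis by (simp add: consistent_def pref_eq_iff)
  qed
  then show "i = j" using inj_\<omega> ij by (auto dest: inj_onD)
qed

lemma card_envs: "card envs = card I"
  by (simp add: envs_def card_image inj_on_env)

lemma env_in_envs: "i \<in> I \<Longrightarrow> env i \<in> envs"
  by (simp add: envs_def)

lemma finite_envs: "finite envs"
  by (simp add: envs_def finite_I)

lemma sum_envs: "(\<Sum>\<nu>\<in>envs. f \<nu>) = (\<Sum>i\<in>I. f (env i))"
  by (simp add: envs_def sum.reindex inj_on_env)

lemma envs_prob_space: "\<nu> \<in> envs \<Longrightarrow> prob_space \<nu> \<and> sets \<nu> = sets (seq_space A)"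
  by (auto simp: envs_def env_def intro!: prob_space_return \<omega>_space)

lemma mix_envs: "mix A envs x = N x / card I"
proof -
  have "mix A envs x = (\<Sum>i\<in>I. mstr A (env i) x) / card I"
    by (simp add: mix_def sum_envs card_envs sum_divide_distrib)
  also have "(\<Sum>i\<in>I. mstr A (env i) x) = (\<Sum>i\<in>I. if i \<in> consistent x then 1 else 0)"
    by (rule sum.cong) (simp_all add: mstr_env)
  also have "\<dots> = N x"
    by (simp add: sum.If_cases finite_I consistent_def Int_def)
  finally show ?thesis .
qed

lemma card_consistent_pos: "i \<in> consistent x \<Longrightarrow> N x > 0"
  using finite_I by (auto simp: consistent_def card_gt_0_iff)

lemma post_env:
  assumes "i \<in> I" shows "post A envs (env i) x = (if i \<in> consistent x then 1 / N x else 0)"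
  using assms card_consistent_pos[of i x] finite_I
  by (auto simp: post_def mix_envs mstr_env card_envs card_0_eq)

lemma condp_env:
  assumes "i \<in> consistent x"
  shows "condp (mstr A (env i)) x a = (if a = \<omega> i (length x) then 1 else 0)"
  using assms by (simp add: condp_def mstr_env consistent_def pref_Suc)

lemma condp_mix_envs:
  assumes "i \<in> consistent x" shows "condp (mix A envs) x a = N (x @ [a]) / N x"
  using assms card_consistent_pos[of i x] finite_I
  by (auto simp: condp_def mix_envs consistent_def)

lemma dKL_env:
  assumes "i \<in> consistent x"
  shows "dKL A envs (env i) x = ln (N x / N (x @ [\<omega> i (length x)]))"
proof -
  let ?c = "\<omega> i (length x)"
  have "?c \<in> A" using assms \<omega>_space seq_space_in_alphabet by (auto simp: consistent_def)
  have "dKL A envs (env i) x = (\<Sum>a\<in>A. if a = ?c then ln (N x / N (x @ [a])) else 0)"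
    unfolding dKL_def using assms by (intro sum.cong) (auto simp: condp_env condp_mix_envs)
  also have "\<dots> = ln (N x / N (x @ [?c]))" using \<open>?c \<in> A\<close> finite_A by simp
  finally show ?thesis .
qed

lemma cstep_envs:
  "cstep A envs n w =
     (\<Sum>i\<in>consistent (pref n w). ln (N (pref n w) / N (pref (Suc n) (\<omega> i)))) / N (pref n w)"
proof -
  define x where "x = pref n w"
  have "cstep A envs n w =
      (\<Sum>i\<in>I. if i \<in> consistent x then ln (N x / N (pref (Suc n) (\<omega> i))) / N x else 0)"
    unfolding cstep_def sum_envs x_def[symmetric]
    by (rule sum.cong) (auto simp: post_env dKL_env consistent_def x_def pref_Suc)
  also have "\<dots> = (\<Sum>i\<in>consistent x. ln (N x / N (pref (Suc n) (\<omega> i)))) / N x"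
    by (simp add: sum.If_cases finite_I consistent_def Int_def sum_divide_distrib)
  finally show ?thesis unfolding x_def .
qed

lemma consistent_pref_Suc_subset:
  "i \<in> consistent (pref n w) \<Longrightarrow> consistent (pref (Suc n) (\<omega> i)) \<subseteq> consistent (pref n w)"
  by (auto simp: consistent_def pref_eq_iff)

lemma cstep_envs_nonneg: "cstep A envs n w \<ge> 0"
proof -
  have "ln (N (pref n w) / N (pref (Suc n) (\<omega> i))) \<ge> 0" if i: "i \<in> consistent (pref n w)" for i
  proof -
    have "i \<in> consistent (pref (Suc n) (\<omega> i))" using i by (simp add: consistent_def)
    then have "0 < N (pref (Suc n) (\<omega> i))" by (rule card_consistent_pos)
    moreover have "N (pref (Suc n) (\<omega> i)) \<le> N (pref n w)"
      using consistent_pref_Suc_subset[OF i] finite_I by (simp add: card_mono consistent_def)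
    ultimately show ?thesis by simp
  qed
  then show ?thesis unfolding cstep_envs by (simp add: sum_nonneg)
qed

end

definition step_loss :: "real \<Rightarrow> real" where
  "step_loss k = (ln k + (k - 1) * ln (k / (k - 1))) / k"

lemma ln_le_pred_squared_div:
  fixes k :: real assumes "3 \<le> k" shows "ln k \<le> (k - 1)\<^sup>2 / k"
proof -
  have e: "9/4 \<le> exp (1::real)" using exp_lower_Taylor_quadratic[of 1] by simp
  have "ln (k / exp 1) \<le> k / exp 1 - 1" using assms by (intro ln_le_minus_one) auto
  then have "ln k \<le> k / exp 1" using assms by (simp add: ln_div)
  also have "\<dots> \<le> k / (9/4)" using e assms by (intro divide_left_mono) auto
  also have "\<dots> \<le> (k - 1)\<^sup>2 / k"
  proof -
    have "0 \<le> (k - 3) * (5 * k - 3)" using assms by simp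
    then have "4 * k\<^sup>2 \<le> 9 * (k - 1)\<^sup>2" by (simp add: power2_eq_square algebra_simps)
    then show ?thesis using assms by (simp add: field_simps power2_eq_square)
  qed
  finally show ?thesis .
qed

lemma step_loss_ge:
  fixes k :: nat assumes "2 \<le> k"
  shows "((ln k)\<^sup>2 - (ln (real k - 1))\<^sup>2) / 2 \<le> step_loss k"
proof -
  define r where "r = real k"
  define L where "L = ln (r / (r - 1))"
  have r: "2 \<le> r" using assms by (simp add: r_def)
  have L: "L = ln r - ln (r - 1)" using r by (simp add: L_def ln_div)
  have L_lower: "1 / r \<le> L"
    using ln_le_minus_one[of "(r - 1) / r"] r by (simp add: L_def ln_div field_simps)
  have L_upper: "L \<le> 1 / (r - 1)"
    using ln_le_minus_one[of "r / (r - 1)"] r by (simp add: L_def field_simps)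
  have "((ln r)\<^sup>2 - (ln (r - 1))\<^sup>2) / 2 = L * ln r - L\<^sup>2 / 2"
    unfolding L by (simp add: power2_eq_square field_simps)
  moreover have "step_loss r - (L * ln r - L\<^sup>2 / 2) = ln r * (1 / r - L) + (r - 1) / r * L + L\<^sup>2 / 2"
    using r by (simp add: step_loss_def L_def field_simps power2_eq_square)
  moreover have "0 \<le> ln r * (1 / r - L) + (r - 1) / r * L + L\<^sup>2 / 2"
  proof (cases "k = 2")
    case True
    then have "L = ln 2" "r = 2" by (simp_all add: L_def r_def)
    moreover have "0 \<le> ln (2::real) * (1 - ln 2 / 2)"
      using ln_le_minus_one[of 2] by simp
    ultimately show ?thesis by (simp add: algebra_simps power2_eq_square)
  next
    case False
    then have r3: "3 \<le> r" using assms by (simp add: r_def)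
    have "ln r * (1 / r - 1 / (r - 1)) \<le> ln r * (1 / r - L)"
      using L_upper r by (intro mult_left_mono) auto
    moreover have "ln r * (1 / r - 1 / (r - 1)) = - (ln r / (r * (r - 1)))"
      using r by (simp add: field_simps)
    moreover have "(r - 1) / r * (1 / r) \<le> (r - 1) / r * L"
      using L_lower r by (intro mult_left_mono) auto
    moreover have "ln r / (r * (r - 1)) \<le> (r - 1) / r * (1 / r)"
    proof -
      have "ln r / (r * (r - 1)) \<le> ((r - 1)\<^sup>2 / r) / (r * (r - 1))"
        using ln_le_pred_squared_div[OF r3] r by (intro divide_right_mono) auto
      also have "\<dots> = (r - 1) / r * (1 / r)" using r by (simp add: field_simps power2_eq_square)
      finally show ?thesis .
    qed
    ultimately show ?thesis using zero_le_power2[of L] by linarith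
  qed
  ultimately show ?thesis unfolding r_def by linarith
qed

lemma sum_step_loss_ge: "(ln (real (Suc m)))\<^sup>2 / 2 \<le> (\<Sum>n<m. step_loss (real (Suc m - n)))"
proof (induction m)
  case (Suc m)
  have "(ln (real (Suc (Suc m))))\<^sup>2 / 2
      = ((ln (real (Suc (Suc m))))\<^sup>2 - (ln (real (Suc m)))\<^sup>2) / 2 + (ln (real (Suc m)))\<^sup>2 / 2"
    by (simp add: field_simps)
  also have "\<dots> \<le> step_loss (real (Suc (Suc m))) + (\<Sum>n<m. step_loss (real (Suc m - n)))"
    using step_loss_ge[of "Suc (Suc m)"] Suc.IH by (intro add_mono) simp_all
  also have "\<dots> = (\<Sum>n<Suc m. step_loss (real (Suc (Suc m) - n)))"
    unfolding sum.lessThan_Suc_shift by simp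
  finally show ?case .
qed simp

definition spike :: "nat \<Rightarrow> nat \<Rightarrow> nat" where
  "spike j = (\<lambda>i. if i = j then 1 else 0)"

lemma pref_spike_eq_iff: "pref n (spike i) = pref n (spike j) \<longleftrightarrow> i = j \<or> (n \<le> i \<and> n \<le> j)"
  by (auto simp: pref_eq_iff spike_def)

interpretation spikes: deterministic_class "{0,1}" "{..<K}" spike for K
proof
  show "inj_on spike {..<K}"
    by (rule inj_onI) (metis spike_def zero_neq_one)
qed (auto simp: spike_def seq_space_def space_PiM PiE_iff)

lemma consistent_spike:
  "i < K \<Longrightarrow> spikes.consistent K (pref n (spike i)) = (if n \<le> i then {n..<K} else {i})"
  by (auto simp: spikes.consistent_def pref_spike_eq_iff)

lemma cstep_spike:
  assumes "Suc n < K"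
  shows "cstep {0,1} (spikes.envs K) n (spike (K - 1)) = step_loss (real (K - n))"
proof -
  have consistent: "spikes.consistent K (pref n (spike (K - 1))) = {n..<K}"
    using assms by (simp add: consistent_spike)
  have "(\<Sum>i\<in>{n..<K}. ln (real (K - n) / real (card (spikes.consistent K (pref (Suc n) (spike i))))))
      = ln (real (K - n)) + real (K - Suc n) * ln (real (K - n) / real (K - Suc n))"
    using assms by (simp add: sum.atLeast_Suc_lessThan consistent_spike)
  moreover have "real (K - Suc n) = real (K - n) - 1" using assms by simp
  ultimately show ?thesis
    unfolding spikes.cstep_envs consistent by (simp add: step_loss_def)
qed

lemma Cinf_spike_ge:
  assumes "1 \<le> K"
  shows "ennreal ((ln K)\<^sup>2 / 2) \<le> Cinf {0,1} (spikes.envs K) (spike (K - 1))"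
proof -
  have "(\<Sum>n<K - 1. cstep {0,1} (spikes.envs K) n (spike (K - 1)))
      = (\<Sum>n<K - 1. step_loss (real (Suc (K - 1) - n)))"
  proof (rule sum.cong[OF refl])
    fix n assume "n \<in> {..<K - 1}"
    then show "cstep {0,1} (spikes.envs K) n (spike (K - 1)) = step_loss (real (Suc (K - 1) - n))"
      using cstep_spike[of n K] assms by simp
  qed
  then have "(ln K)\<^sup>2 / 2 \<le> (\<Sum>n<K - 1. cstep {0,1} (spikes.envs K) n (spike (K - 1)))"
    using sum_step_loss_ge[of "K - 1"] assms by simp
  then have "ennreal ((ln K)\<^sup>2 / 2) \<le> ennreal (\<Sum>n<K - 1. cstep {0,1} (spikes.envs K) n (spike (K - 1)))"
    by (rule ennreal_leI)
  also have "\<dots> = (\<Sum>n<K - 1. ennreal (cstep {0,1} (spikes.envs K) n (spike (K - 1))))"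
    by (rule sum_ennreal[symmetric]) (rule spikes.cstep_envs_nonneg)
  also have "\<dots> \<le> Cinf {0,1} (spikes.envs K) (spike (K - 1))"
    unfolding Cinf_def by (rule sum_le_suminf) auto
  finally show ?thesis .
qed

theorem proposition2:
  fixes K :: nat
  assumes "K \<ge> 1"
  shows "\<exists>(A :: nat set) (M :: (nat \<Rightarrow> nat) measure set) \<mu>.
           finite A \<and> A \<noteq> {} \<and>
           finite M \<and> card M = K \<and>
           (\<forall>\<nu>\<in>M. prob_space \<nu> \<and> sets \<nu> = sets (seq_space A)) \<and>
           \<mu> \<in> M \<and>
           enn2ereal (\<integral>\<^sup>+ \<omega>. Cinf A M \<omega> \<partial>\<mu>) > ereal ((ln (real K))\<^sup>2 / 2 - 1)"
proof (intro exI conjI)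
  let ?\<omega> = "spike (K - 1)"
  have \<omega>_space: "?\<omega> \<in> space (seq_space {0,1})" using assms by (intro spikes.\<omega>_space) auto
  show "finite {0::nat,1}" "{0::nat,1} \<noteq> {}" by auto
  show "finite (spikes.envs K)" by (rule spikes.finite_envs)
  show "card (spikes.envs K) = K" using spikes.card_envs[of K] by simp
  show "\<forall>\<nu>\<in>spikes.envs K. prob_space \<nu> \<and> sets \<nu> = sets (seq_space {0,1})"
    using spikes.envs_prob_space by blast
  show "spikes.env (K - 1) \<in> spikes.envs K" using assms by (intro spikes.env_in_envs) simp
  have "(\<integral>\<^sup>+ \<omega>. Cinf {0,1} (spikes.envs K) \<omega> \<partial>spikes.env (K - 1)) = Cinf {0,1} (spikes.envs K) ?\<omega>"
    unfolding spikes.env_def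
    by (rule nn_integral_return_singleton[OF \<omega>_space singleton_in_seq_space[OF \<omega>_space]])
  then have "ennreal ((ln K)\<^sup>2 / 2) \<le> (\<integral>\<^sup>+ \<omega>. Cinf {0,1} (spikes.envs K) \<omega> \<partial>spikes.env (K - 1))"
    using Cinf_spike_ge[OF assms] by simp
  then have "ereal ((ln K)\<^sup>2 / 2) \<le> enn2ereal (\<integral>\<^sup>+ \<omega>. Cinf {0,1} (spikes.envs K) \<omega> \<partial>spikes.env (K - 1))"
    by (simp add: less_eq_ennreal.rep_eq)
  then show "enn2ereal (\<integral>\<^sup>+ \<omega>. Cinf {0,1} (spikes.envs K) \<omega> \<partial>spikes.env (K - 1)) > ereal ((ln (real K))\<^sup>2 / 2 - 1)"
    by (rule less_le_trans[rotated]) simp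
qed

end
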